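(* For any prime $p>3$, $$\sum_{k=1}^{p-1} {(1/2)_k^2\over (1)_k^2}\cdot{1\over k}\equiv -2H_{(p-1)/2}(1)\pmod{p^3},$$ $$\sum_{k=1}^{p-1} {(1/2)_k^2\over (1)_k^2}\cdot{1\over k^2}\equiv -2H_{(p-1)/2}(1)^2\pmod{p^2}.$$
   Context: $(y)_n=y(y+1)\cdots(y+n-1)$ denotes the Pochhammer symbol, and $H_n(1)=\sum_{k=1}^n \frac1k$. Congruences between rational numbers modulo $p^j$ mean that the difference is a rational number whose numerator is divisible by $p^j$ and whose denominator is prime to $p$. *)

theory Defs
  imports Complex_Main "HOL-Computational_Algebra.Primes"
begin

definition rat_cong :: "rat \<Rightarrow> rat \<Rightarrow> nat \<Rightarrow> bool" where
  "rat_cong a b m \<longleftrightarrow>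
     (case quotient_of (a - b) of (n, d) \<Rightarrow> int m dvd n \<and> coprime d (int m))"

definition harm :: "nat \<Rightarrow> rat" where
  "harm n = (\<Sum>k=1..n. 1 / of_nat k)"

end

theory Submission
  imports Defs "HOL-Computational_Algebra.Polynomial" "HOL-Number_Theory.Residues"
begin

text \<open>
  Let \<open>D\<^sub>k(x) = \<Prod>\<^sub>j\<^sub><\<^sub>k (x - j)(x + j + 1)\<close>. Then \<open>D\<^sub>k(-1/2) = (-1)\<^sup>k (1/2)\<^sub>k\<^sup>2\<close>, so both sums are
  values at \<open>-1/2\<close> of polynomials such as \<open>f(x) = \<Sum>\<^sub>0\<^sub><\<^sub>k\<^sub><\<^sub>p (-1)\<^sup>k D\<^sub>k(x) / (k k!\<^sup>2)\<close>. At the integer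
  \<open>n = (p - 1)/2\<close> the sums stop at \<open>k = n\<close>, and the partial fraction expansion of
  \<open>\<Prod>\<^sub>j\<^sub>\<le>\<^sub>n (j - x)/(j + x)\<close> evaluates them to \<open>-2 H\<^sub>n\<close> and \<open>-2 H\<^sub>n\<^sup>2\<close>.

  Since \<open>-1/2 = n - p/2\<close>, every factor of \<open>D\<^sub>k\<close> changes by \<open>-p\<^sup>2/4\<close> between \<open>n\<close> and \<open>-1/2\<close>, which gives
  the congruence modulo \<open>p\<^sup>2\<close> term by term. For the one modulo \<open>p\<^sup>3\<close>, the symmetry
  \<open>f(-1 - x) = f(x)\<close> gives \<open>f(-1/2 \<plusminus> p/2) = f(n)\<close>, so Taylor expansion at \<open>-1/2\<close> leaves
  \<open>p\<^sup>2/4\<close> times the quadratic Taylor coefficient \<open>c\<close>, up to \<open>p\<^sup>3\<close>. That \<open>c \<equiv> 0 (mod p)\<close> follows from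
  \<open>x (f(x) - f(x - 1)) = 2 (\<Prod>\<^sub>0\<^sub><\<^sub>j\<^sub><\<^sub>p (1 - x\<^sup>2/j\<^sup>2) - 1)\<close>, Wilson's theorem and \<open>\<Sum>\<^sub>0\<^sub><\<^sub>k\<^sub><\<^sub>p 1/k\<^sup>3 \<equiv> 0\<close>.
\<close>

(* HOL-Algebra, imported through Residues for Wilson's theorem, also defines coeff and smult. *)
hide_const (open) UnivPoly.coeff module.smult

section \<open>\<open>p\<close>-integral rationals\<close>

definition p_integral :: "nat \<Rightarrow> rat \<Rightarrow> bool" where
  "p_integral p x \<longleftrightarrow> (\<exists>a b. coprime b (int p) \<and> x = of_int a / of_int b)"

definition p_multiple :: "nat \<Rightarrow> nat \<Rightarrow> rat \<Rightarrow> bool" where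
  "p_multiple p j x \<longleftrightarrow> p_integral p (x / of_nat p ^ j)"

lemma p_integral_of_int [simp]: "p_integral p (of_int a)"
  unfolding p_integral_def by (rule exI[of _ a], rule exI[of _ 1]) auto

lemma p_integral_of_nat [simp]: "p_integral p (of_nat a)"
  using p_integral_of_int[of p "int a"] by simp

lemma p_integral_numeral [simp]: "p_integral p (numeral k)"
  using p_integral_of_int[of p "numeral k"] by simp

lemma p_integral_0 [simp]: "p_integral p 0"
  and p_integral_1 [simp]: "p_integral p 1"
  using p_integral_of_int[of p 0] p_integral_of_int[of p 1] by simp_all

lemma p_integral_divide_of_int:
  assumes "p_integral p x" "coprime b (int p)"
  shows "p_integral p (x / of_int b)"
proof -
  from assms(1) obtain a c where "coprime c (int p)" "x = of_int a / of_int c"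
    unfolding p_integral_def by auto
  then show ?thesis unfolding p_integral_def using assms(2)
    by (intro exI[of _ a] exI[of _ "c * b"]) auto
qed

lemma p_integral_uminus [simp]: "p_integral p (- x) \<longleftrightarrow> p_integral p x"
proof -
  have "p_integral p (- y)" if "p_integral p y" for y
    using that unfolding p_integral_def by (metis minus_divide_left of_int_minus)
  from this[of x] this[of "- x"] show ?thesis by auto
qed

lemma p_integral_add [intro]:
  assumes "p_integral p x" "p_integral p y"
  shows "p_integral p (x + y)"
proof -
  from assms obtain a b c d where ab: "coprime b (int p)" "x = of_int a / of_int b"
    and cd: "coprime d (int p)" "y = of_int c / of_int d"
    unfolding p_integral_def by auto
  show ?thesis
  proof (cases "b = 0 \<or> d = 0")
    case True
    then show ?thesis using assms ab cd by auto
  next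
    case False
    then have "x + y = of_int (a * d + c * b) / of_int (b * d)"
      using ab cd by (simp add: field_simps)
    then show ?thesis unfolding p_integral_def using ab cd
      by (intro exI[of _ "a * d + c * b"] exI[of _ "b * d"]) auto
  qed
qed

lemma p_integral_mult [intro]:
  assumes "p_integral p x" "p_integral p y"
  shows "p_integral p (x * y)"
proof -
  from assms obtain a b c d where "coprime b (int p)" "x = of_int a / of_int b"
    and "coprime d (int p)" "y = of_int c / of_int d"
    unfolding p_integral_def by auto
  then show ?thesis unfolding p_integral_def
    by (intro exI[of _ "a * c"] exI[of _ "b * d"]) auto
qed

lemma p_integral_diff [intro]: "p_integral p x \<Longrightarrow> p_integral p y \<Longrightarrow> p_integral p (x - y)"
  using p_integral_add[of p x "- y"] by simp

lemma p_integral_sum [intro]: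
  "(\<And>i. i \<in> A \<Longrightarrow> p_integral p (f i)) \<Longrightarrow> p_integral p (\<Sum>i\<in>A. f i)"
  by (induction A rule: infinite_finite_induct) auto

lemma p_integral_prod [intro]:
  "(\<And>i. i \<in> A \<Longrightarrow> p_integral p (f i)) \<Longrightarrow> p_integral p (\<Prod>i\<in>A. f i)"
  by (induction A rule: infinite_finite_induct) auto

lemma p_integral_power [intro]: "p_integral p x \<Longrightarrow> p_integral p (x ^ k)"
  by (induction k) auto

lemma p_integral_divide_of_nat:
  assumes "prime p" "p_integral p x" "\<not> p dvd k"
  shows "p_integral p (x / of_nat k)"
proof -
  have "coprime (int k) (int p)"
    using assms by (metis coprime_commute coprime_int_iff prime_imp_coprime_nat)
  then show ?thesis using p_integral_divide_of_int[OF assms(2), of "int k"] by simp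
qed

lemma p_integral_inverse_of_nat:
  "prime p \<Longrightarrow> \<not> p dvd k \<Longrightarrow> p_integral p (1 / of_nat k)"
  using p_integral_divide_of_nat[of p 1 k] by simp

lemma p_integral_inverse_of_nat_less:
  "prime p \<Longrightarrow> 0 < k \<Longrightarrow> k < p \<Longrightarrow> p_integral p (1 / of_nat k)"
  by (meson dvd_imp_le not_le p_integral_inverse_of_nat)

lemma p_integral_half:
  assumes "prime p" "p > 2"
  shows "p_integral p (1 / 2)"
  using p_integral_inverse_of_nat_less[OF assms(1), of 2] assms(2) by simp

lemma p_multiple_zero [simp]: "p_multiple p j 0"
  unfolding p_multiple_def by simp

lemma p_multiple_add [intro]: "p_multiple p j x \<Longrightarrow> p_multiple p j y \<Longrightarrow> p_multiple p j (x + y)"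
  unfolding p_multiple_def by (metis add_divide_distrib p_integral_add)

lemma p_multiple_uminus [simp]: "p_multiple p j (- x) \<longleftrightarrow> p_multiple p j x"
  unfolding p_multiple_def by simp

lemma p_multiple_diff [intro]: "p_multiple p j x \<Longrightarrow> p_multiple p j y \<Longrightarrow> p_multiple p j (x - y)"
  using p_multiple_add[of p j x "- y"] by simp

lemma p_multiple_sum [intro]:
  "(\<And>i. i \<in> A \<Longrightarrow> p_multiple p j (f i)) \<Longrightarrow> p_multiple p j (\<Sum>i\<in>A. f i)"
  by (induction A rule: infinite_finite_induct) auto

lemma p_multiple_mult_right [intro]: "p_multiple p j x \<Longrightarrow> p_integral p y \<Longrightarrow> p_multiple p j (x * y)"
  unfolding p_multiple_def using p_integral_mult[of p "x / of_nat p ^ j" y] by (simp add: field_simps)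

lemma p_multiple_mult_left [intro]: "p_integral p y \<Longrightarrow> p_multiple p j x \<Longrightarrow> p_multiple p j (y * x)"
  using p_multiple_mult_right[of p j x y] by (simp add: mult.commute)

lemma p_multiple_mult:
  assumes "p_multiple p i x" "p_multiple p j y"
  shows "p_multiple p (i + j) (x * y)"
proof -
  have "x * y / of_nat p ^ (i + j) = (x / of_nat p ^ i) * (y / of_nat p ^ j)"
    by (simp add: power_add)
  then show ?thesis using assms unfolding p_multiple_def by (simp only:) (rule p_integral_mult)
qed

lemma p_multiple_of_nat_power [intro]: "p_integral p y \<Longrightarrow> p_multiple p j (of_nat p ^ j * y)"
  unfolding p_multiple_def by (cases "p = 0") auto

lemma p_multiple_divide_of_nat:
  "prime p \<Longrightarrow> p_multiple p j x \<Longrightarrow> \<not> p dvd k \<Longrightarrow> p_multiple p j (x / of_nat k)"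
  using p_multiple_mult_right[of p j x "1 / of_nat k"] p_integral_inverse_of_nat[of p k] by simp

lemma p_multiple_prod_diff:
  assumes "\<And>i. i \<in> A \<Longrightarrow> p_integral p (f i)" "\<And>i. i \<in> A \<Longrightarrow> p_integral p (g i)"
    and "\<And>i. i \<in> A \<Longrightarrow> p_multiple p j (f i - g i)"
  shows "p_multiple p j ((\<Prod>i\<in>A. f i) - (\<Prod>i\<in>A. g i))"
  using assms
proof (induction A rule: infinite_finite_induct)
  case (insert a A)
  have "(\<Prod>i\<in>insert a A. f i) - (\<Prod>i\<in>insert a A. g i)
      = (f a - g a) * (\<Prod>i\<in>A. f i) + g a * ((\<Prod>i\<in>A. f i) - (\<Prod>i\<in>A. g i))"
    using insert by (simp add: algebra_simps)
  also have "p_multiple p j \<dots>"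
    using insert by (intro p_multiple_add p_multiple_mult_right p_multiple_mult_left p_integral_prod) auto
  finally show ?case .
qed auto

lemma rat_cong_if_p_multiple:
  assumes "prime p" "p_multiple p j (a - b)"
  shows "rat_cong a b (p ^ j)"
proof -
  obtain N D where q: "quotient_of (a - b) = (N, D)" by (cases "quotient_of (a - b)") auto
  have D: "D > 0" "coprime N D" using q quotient_of_denom_pos quotient_of_coprime by blast+
  have ab: "a - b = of_int N / of_int D" using q quotient_of_div by blast
  from assms(2) obtain A B where AB: "coprime B (int p)" "(a - b) / of_nat p ^ j = of_int A / of_int B"
    unfolding p_multiple_def p_integral_def by auto
  have "B \<noteq> 0" using AB(1) prime_gt_1_nat[OF assms(1)] by auto
  moreover have "(of_nat p ^ j :: rat) \<noteq> 0" using prime_gt_0_nat[OF assms(1)] by simp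
  ultimately have "of_int (N * B) = (of_int (A * int p ^ j * D) :: rat)"
    using AB(2) ab D(1) by (simp add: field_simps)
  then have eq: "N * B = A * int p ^ j * D" by (simp only: of_int_eq_iff)
  have "coprime (int p ^ j) B" using AB(1) by (simp add: coprime_commute)
  then have "int p ^ j dvd N"
    using eq coprime_dvd_mult_left_iff by (metis dvd_mult2 dvd_triv_right mult.commute)
  moreover have "D dvd B"
    using eq D(2) by (metis coprime_commute coprime_dvd_mult_right_iff dvd_triv_right mult.commute)
  then have "coprime D (int (p ^ j))" using AB(1) coprime_divisors by fastforce
  ultimately show ?thesis unfolding rat_cong_def q by simp
qed

definition poly_p_integral :: "nat \<Rightarrow> rat poly \<Rightarrow> bool" where
  "poly_p_integral p P \<longleftrightarrow> (\<forall>i. p_integral p (coeff P i))"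

definition poly_p_multiple :: "nat \<Rightarrow> nat \<Rightarrow> rat poly \<Rightarrow> bool" where
  "poly_p_multiple p j P \<longleftrightarrow> (\<forall>i. p_multiple p j (coeff P i))"

lemma poly_p_integral_pCons [simp]:
  "poly_p_integral p (pCons a P) \<longleftrightarrow> p_integral p a \<and> poly_p_integral p P"
  unfolding poly_p_integral_def by (auto simp: coeff_pCons split: nat.splits)

lemma poly_p_multiple_pCons [simp]:
  "poly_p_multiple p j (pCons a P) \<longleftrightarrow> p_multiple p j a \<and> poly_p_multiple p j P"
  unfolding poly_p_multiple_def by (auto simp: coeff_pCons split: nat.splits)

lemma poly_p_multiple_0 [simp]: "poly_p_multiple p j 0"
  unfolding poly_p_multiple_def by simp

lemma poly_p_integral_0 [simp]: "poly_p_integral p 0"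
  and poly_p_integral_1 [simp]: "poly_p_integral p 1"
  unfolding poly_p_integral_def by (auto simp: coeff_1)

lemma poly_p_integral_add [intro]:
  "poly_p_integral p P \<Longrightarrow> poly_p_integral p Q \<Longrightarrow> poly_p_integral p (P + Q)"
  unfolding poly_p_integral_def by auto

lemma poly_p_integral_smult [intro]:
  "p_integral p c \<Longrightarrow> poly_p_integral p P \<Longrightarrow> poly_p_integral p (smult c P)"
  unfolding poly_p_integral_def by auto

lemma poly_p_integral_mult [intro]:
  "poly_p_integral p P \<Longrightarrow> poly_p_integral p Q \<Longrightarrow> poly_p_integral p (P * Q)"
  unfolding poly_p_integral_def coeff_mult by auto

lemma poly_p_integral_sum [intro]:
  "(\<And>i. i \<in> A \<Longrightarrow> poly_p_integral p (f i)) \<Longrightarrow> poly_p_integral p (\<Sum>i\<in>A. f i)"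
  by (induction A rule: infinite_finite_induct) auto

lemma poly_p_integral_prod [intro]:
  "(\<And>i. i \<in> A \<Longrightarrow> poly_p_integral p (f i)) \<Longrightarrow> poly_p_integral p (\<Prod>i\<in>A. f i)"
  by (induction A rule: infinite_finite_induct) auto

lemma poly_p_integral_poly_shift [intro]:
  "poly_p_integral p P \<Longrightarrow> poly_p_integral p (poly_shift n P)"
  unfolding poly_p_integral_def by (simp add: coeff_poly_shift)

lemma poly_p_multiple_add [intro]:
  "poly_p_multiple p j P \<Longrightarrow> poly_p_multiple p j Q \<Longrightarrow> poly_p_multiple p j (P + Q)"
  unfolding poly_p_multiple_def by auto

lemma poly_p_multiple_mult [intro]:
  "poly_p_multiple p j P \<Longrightarrow> poly_p_integral p Q \<Longrightarrow> poly_p_multiple p j (P * Q)"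
  unfolding poly_p_multiple_def poly_p_integral_def coeff_mult by auto

lemma poly_p_integral_pcompose [intro]:
  assumes "poly_p_integral p P" "poly_p_integral p Q"
  shows "poly_p_integral p (pcompose P Q)"
  using assms(1) by (induction P) (use assms(2) in \<open>auto simp: pcompose_pCons\<close>)

lemma poly_p_multiple_pcompose_diff:
  assumes "poly_p_integral p P" "poly_p_integral p Q1" "poly_p_integral p Q2"
    and "poly_p_multiple p j (Q1 - Q2)"
  shows "poly_p_multiple p j (pcompose P Q1 - pcompose P Q2)"
  using assms(1)
proof (induction P)
  case (pCons a P)
  have "pcompose (pCons a P) Q1 - pcompose (pCons a P) Q2
     = (Q1 - Q2) * pcompose P Q1 + (pcompose P Q1 - pcompose P Q2) * Q2"
    by (simp add: pcompose_pCons algebra_simps)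
  also have "poly_p_multiple p j \<dots>" using pCons assms by auto
  finally show ?case .
qed simp

lemma p_integral_poly [intro]:
  "poly_p_integral p P \<Longrightarrow> p_integral p x \<Longrightarrow> p_integral p (poly P x)"
  by (induction P) auto

lemma coeff_mult_0_1_2:
  fixes P Q :: "'a :: comm_semiring_0 poly"
  shows "coeff (P * Q) 0 = coeff P 0 * coeff Q 0"
    and "coeff (P * Q) 1 = coeff P 0 * coeff Q 1 + coeff P 1 * coeff Q 0"
    and "coeff (P * Q) 2 = coeff P 0 * coeff Q 2 + coeff P 1 * coeff Q 1 + coeff P 2 * coeff Q 0"
  by (simp_all add: coeff_mult numeral_2_eq_2 atMost_Suc algebra_simps)

lemma poly_eq_taylor3:
  fixes Q :: "'a :: comm_ring_1 poly"
  shows "poly Q h = coeff Q 0 + coeff Q 1 * h + coeff Q 2 * h^2 + h^3 * poly (poly_shift 3 Q) h"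
proof -
  have "Q = pCons (coeff Q 0) (pCons (coeff Q 1) (pCons (coeff Q 2) (poly_shift 3 Q)))" (is "_ = ?T")
  proof (rule poly_eqI)
    fix n show "coeff Q n = coeff ?T n"
      by (cases n; cases "n - 1"; cases "n - 2")
        (auto simp: coeff_pCons' coeff_poly_shift numeral_3_eq_3 numeral_2_eq_2)
  qed
  then have "poly Q h = poly ?T h" by (rule arg_cong)
  then show ?thesis by (simp add: power2_eq_square power3_eq_cube algebra_simps)
qed

lemma p_multiple_poly_symmetric_pair:
  assumes "poly_p_integral p Q" "p_multiple p 1 (coeff Q 2)" "p_integral p t"
  shows "p_multiple p 3 (poly Q (of_nat p * t) + poly Q (- (of_nat p * t)) - 2 * coeff Q 0)"
proof -
  define R where "R = poly_shift 3 Q"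
  have "poly Q (of_nat p * t) + poly Q (- (of_nat p * t)) - 2 * coeff Q 0
      = (of_nat p)^2 * 1 * (coeff Q 2 * (2 * t^2))
        + of_nat p ^ 3 * (t^3 * (poly R (of_nat p * t) - poly R (- (of_nat p * t))))"
    unfolding poly_eq_taylor3[of Q] R_def by (simp add: algebra_simps)
  also have "p_multiple p 3 \<dots>"
  proof (rule p_multiple_add)
    have "p_multiple p (2 + 1) ((of_nat p)^2 * 1 * (coeff Q 2 * (2 * t^2)))"
      using assms by (intro p_multiple_mult p_multiple_of_nat_power p_multiple_mult_right) auto
    then show "p_multiple p 3 ((of_nat p)^2 * 1 * (coeff Q 2 * (2 * t^2)))" by simp
    show "p_multiple p 3 (of_nat p ^ 3 * (t^3 * (poly R (of_nat p * t) - poly R (- (of_nat p * t)))))"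
      using assms unfolding R_def by (intro p_multiple_of_nat_power p_integral_mult p_integral_power
          p_integral_diff p_integral_poly poly_p_integral_poly_shift) auto
  qed
  finally show ?thesis .
qed

section \<open>The interpolating polynomial\<close>

definition D_poly :: "nat \<Rightarrow> rat poly" where
  "D_poly k = (\<Prod>j<k. [:- of_nat j, 1:] * [:of_nat j + 1, 1:])"

definition Pi_poly :: "nat \<Rightarrow> rat poly" where
  "Pi_poly m = (\<Prod>j=1..m. [:1, 0, - 1 / (of_nat j)^2:])"

definition c_coeff :: "nat \<Rightarrow> rat" where
  "c_coeff k = (-1)^k / (of_nat k * (fact k)^2)"

text \<open>The value of \<open>f_poly (p - 1)\<close> at \<open>-1/2\<close> is the first sum of the theorem, and its value at
  \<open>(p - 1)/2\<close> is the right-hand side of the first congruence.\<close>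
definition f_poly :: "nat \<Rightarrow> rat poly" where
  "f_poly m = (\<Sum>k=1..m. smult (c_coeff k) (D_poly k))"

lemma poly_D_poly: "poly (D_poly k) x = (\<Prod>j<k. (x - of_nat j) * (x + of_nat j + 1))"
  unfolding D_poly_def by (simp add: poly_prod algebra_simps)

lemma poly_f_poly: "poly (f_poly m) x = (\<Sum>k=1..m. c_coeff k * poly (D_poly k) x)"
  unfolding f_poly_def by (simp add: poly_sum)

lemma poly_Pi_poly_Suc:
  "poly (Pi_poly (Suc m)) x = poly (Pi_poly m) x * (1 - x^2 / (of_nat (Suc m))^2)"
  unfolding Pi_poly_def by (simp add: poly_prod power2_eq_square right_diff_distrib)

lemma fact_Suc_square_mult:
  "(fact (Suc k) :: 'a :: field_char_0)^2 * (1 - x^2 / (of_nat (Suc k))^2)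
    = (fact k)^2 * ((of_nat (Suc k))^2 - x^2)"
proof -
  have "(of_nat (Suc k) :: 'a) \<noteq> 0" by (rule of_nat_neq_0)
  then show ?thesis by (simp add: fact_Suc field_simps power_mult_distrib del: of_nat_Suc)
qed

lemma poly_D_poly_Suc:
  "poly (D_poly (Suc k)) x = (-1)^k * (fact k)^2 * (x * (x + of_nat (Suc k)) * poly (Pi_poly k) x)"
  (is "_ = ?rhs k")
proof (induction k)
  case 0 then show ?case by (simp add: poly_D_poly Pi_poly_def)
next
  case (Suc k)
  have "poly (D_poly (Suc (Suc k))) x
      = poly (D_poly (Suc k)) x * ((x - of_nat (Suc k)) * (x + of_nat (Suc (Suc k))))"
    unfolding poly_D_poly by (simp add: algebra_simps)
  also have "\<dots> = (-1)^Suc k * ((fact k)^2 * ((of_nat (Suc k))^2 - x^2))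
      * (x * (x + of_nat (Suc (Suc k))) * poly (Pi_poly k) x)"
    unfolding Suc by (simp add: algebra_simps power2_eq_square)
  also have "\<dots> = ?rhs (Suc k)"
    unfolding poly_Pi_poly_Suc fact_Suc_square_mult[symmetric] by (simp only: mult_ac)
  finally show ?case .
qed

lemma poly_D_poly_reflect: "poly (D_poly k) (-1 - x) = poly (D_poly k) x"
  unfolding poly_D_poly by (rule prod.cong) (auto simp: algebra_simps)

lemma poly_Pi_poly_uminus: "poly (Pi_poly m) (- x) = poly (Pi_poly m) x"
  unfolding Pi_poly_def by (simp add: poly_prod)

lemma poly_D_poly_Suc_shift:
  "poly (D_poly (Suc k)) (x - 1) = (-1)^k * (fact k)^2 * (x * (x - of_nat (Suc k)) * poly (Pi_poly k) x)"
  using poly_D_poly_reflect[of "Suc k" "x - 1"] poly_D_poly_Suc[of k "- x"]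
  by (simp add: poly_Pi_poly_uminus algebra_simps)

lemma poly_f_poly_reflect: "poly (f_poly m) (-1 - x) = poly (f_poly m) x"
  unfolding poly_f_poly by (simp add: poly_D_poly_reflect)

lemma f_poly_difference:
  "x * (poly (f_poly m) x - poly (f_poly m) (x - 1)) = 2 * (poly (Pi_poly m) x - 1)"
proof (induction m)
  case 0 then show ?case by (simp add: f_poly_def Pi_poly_def)
next
  case (Suc m)
  have "x * (poly (f_poly (Suc m)) x - poly (f_poly (Suc m)) (x - 1))
      = x * (poly (f_poly m) x - poly (f_poly m) (x - 1))
        + c_coeff (Suc m) * x * (poly (D_poly (Suc m)) x - poly (D_poly (Suc m)) (x - 1))"
    by (simp add: poly_f_poly algebra_simps)
  also have "\<dots> = 2 * (poly (Pi_poly (Suc m)) x - 1)"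
  proof -
    have "(of_nat (Suc m) :: rat) \<noteq> 0" "(fact m :: rat) \<noteq> 0" by simp_all
    then show ?thesis
      unfolding Suc poly_D_poly_Suc[of m x] poly_D_poly_Suc_shift[of m x] poly_Pi_poly_Suc c_coeff_def
      by (simp add: fact_Suc field_simps power2_eq_square del: of_nat_Suc)
  qed
  finally show ?case .
qed

lemma poly_D_poly_minus_half: "poly (D_poly k) (-1/2) = (-1)^k * (pochhammer (1/2) k)^2"
proof -
  have "poly (D_poly k) (-1/2) = (\<Prod>j<k. (-1) * ((1/2 + of_nat j) * (1/2 + of_nat j)))"
    unfolding poly_D_poly by (rule prod.cong) (auto simp: field_simps)
  also have "\<dots> = (\<Prod>j<k. - 1) * ((\<Prod>j<k. 1/2 + of_nat j) * (\<Prod>j<k. 1/2 + of_nat j))"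
    by (simp only: prod.distrib)
  finally show ?thesis by (simp add: pochhammer_prod power2_eq_square atLeast0LessThan)
qed

lemma coeff_Pi_poly_0: "coeff (Pi_poly m) 0 = 1"
  and coeff_Pi_poly_1: "coeff (Pi_poly m) 1 = 0"
  by (induction m) (simp_all add: Pi_poly_def coeff_mult_0_1_2)

lemma D_poly_Suc:
  "D_poly (Suc k) = smult ((-1)^k * (fact k)^2) ([:0, 1:] * [:of_nat (Suc k), 1:] * Pi_poly k)"
  by (rule poly_eq_poly_eq_iff[THEN iffD1]) (simp add: poly_D_poly_Suc algebra_simps fun_eq_iff)

lemma coeff_f_poly_2: "coeff (f_poly m) 2 = - (\<Sum>k=1..m. 1 / (of_nat k)^3)"
proof -
  have "c_coeff k * coeff (D_poly k) 2 = - (1 / (of_nat k)^3)" if "k \<ge> 1" for k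
  proof -
    obtain k' where k: "k = Suc k'" using \<open>k \<ge> 1\<close> by (cases k) auto
    have "coeff (D_poly (Suc k')) 2 = (-1)^k' * (fact k')^2"
      unfolding D_poly_Suc
      by (simp add: numeral_2_eq_2 coeff_Pi_poly_0 coeff_Pi_poly_1[unfolded One_nat_def] del: of_nat_Suc)
    moreover have "(fact k' :: rat) \<noteq> 0" "(of_nat (Suc k') :: rat) \<noteq> 0" by simp_all
    ultimately show ?thesis
      unfolding k c_coeff_def by (simp add: fact_Suc field_simps power2_eq_square power3_eq_cube del: of_nat_Suc)
  qed
  then show ?thesis unfolding f_poly_def by (simp add: coeff_sum sum_negf)
qed

section \<open>Values at integers: partial fractions\<close>

lemma poly_D_poly_of_nat:
  "k \<le> n \<Longrightarrow> poly (D_poly k) (of_nat n) = fact (n + k) / fact (n - k)"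
proof (induction k)
  case (Suc k)
  then obtain m where m: "n - k = Suc m" "n - Suc k = m"
    by (metis Suc_diff_Suc Suc_le_lessD diff_Suc_Suc)
  have "(of_nat n - of_nat k :: rat) = of_nat (Suc m)"
    using Suc.prems m by (simp add: of_nat_diff[symmetric])
  then have "poly (D_poly (Suc k)) (of_nat n)
      = poly (D_poly k) (of_nat n) * (of_nat (Suc m) * of_nat (Suc (n + k)))"
    unfolding poly_D_poly by (simp add: algebra_simps)
  also have "\<dots> = fact (n + k) / (of_nat (Suc m) * fact m) * (of_nat (Suc m) * of_nat (Suc (n + k)))"
    using Suc m by (simp add: fact_Suc)
  also have "\<dots> = fact (n + Suc k) / fact (n - Suc k)"
    using m by (simp add: fact_Suc field_simps del: of_nat_Suc)
  finally show ?case .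
qed (simp add: poly_D_poly)

lemma poly_D_poly_of_nat_eq_0: "n < k \<Longrightarrow> poly (D_poly k) (of_nat n) = 0"
  unfolding poly_D_poly by (intro prod_zero) (auto intro!: bexI[of _ n])

lemma prod_of_nat_plus: "(\<Prod>j=1..n. of_nat j + of_nat k :: rat) * fact k = fact (n + k)"
proof (induction n)
  case (Suc n)
  have "(\<Prod>j=1..Suc n. of_nat j + of_nat k :: rat) * fact k
      = ((\<Prod>j=1..n. of_nat j + of_nat k) * fact k) * (of_nat (Suc n) + of_nat k)"
    by (simp add: algebra_simps)
  also have "\<dots> = fact (Suc n + k)" unfolding Suc by (simp add: fact_Suc)
  finally show ?case .
qed simp

lemma prod_of_nat_minus:
  assumes "1 \<le> k" "k \<le> n"
  shows "(\<Prod>j\<in>{1..n}-{k}. of_nat j - of_nat k :: rat) = (-1)^(k - 1) * fact (k - 1) * fact (n - k)"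
proof -
  have split: "{1..n} - {k} = {1..<k} \<union> {Suc k..n}" using assms by auto
  have "(\<Prod>j\<in>{1..<k}. of_nat j - of_nat k :: rat) = (\<Prod>i\<in>{1..<k}. - of_nat i)"
    by (subst prod.atLeastLessThan_rev) (rule prod.cong, auto)
  also have "\<dots> = (-1)^(k - 1) * fact (k - 1)"
    using assms by (simp add: prod_uminus fact_prod atLeastLessThanSuc_atLeastAtMost[symmetric])
  finally have low: "(\<Prod>j\<in>{1..<k}. of_nat j - of_nat k :: rat) = (-1)^(k - 1) * fact (k - 1)" .
  have "(\<Prod>j\<in>{Suc k..n}. of_nat j - of_nat k :: rat) = (\<Prod>i\<in>{1..n - k}. of_nat i)"
    using prod.shift_bounds_cl_nat_ivl[of "\<lambda>j. of_nat j - of_nat k :: rat" 1 k "n - k"] assms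
    by (simp add: add.commute)
  also have "\<dots> = fact (n - k)" by (simp add: fact_prod)
  finally have high: "(\<Prod>j\<in>{Suc k..n}. of_nat j - of_nat k :: rat) = fact (n - k)" .
  have "(\<Prod>j\<in>{1..n}-{k}. of_nat j - of_nat k :: rat)
      = (\<Prod>j\<in>{1..<k}. of_nat j - of_nat k) * (\<Prod>j\<in>{Suc k..n}. of_nat j - of_nat k)"
    unfolding split by (rule prod.union_disjoint) auto
  then show ?thesis unfolding low high .
qed

definition pf_coeff :: "nat \<Rightarrow> nat \<Rightarrow> rat" where
  "pf_coeff n k = (-1)^k * fact (n + k) / ((fact k)^2 * fact (n - k))"

lemma c_coeff_mult_D_poly_of_nat:
  "k \<le> n \<Longrightarrow> c_coeff k * poly (D_poly k) (of_nat n) = pf_coeff n k / of_nat k"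
  by (simp add: c_coeff_def pf_coeff_def poly_D_poly_of_nat)

lemma pf_coeff_residue:
  assumes "1 \<le> k" "k \<le> n"
  shows "(\<Prod>j=1..n. of_nat j + of_nat k) = - of_nat k * pf_coeff n k * (\<Prod>j\<in>{1..n}-{k}. of_nat j - of_nat k)"
proof -
  obtain k' where k: "k = Suc k'" using assms by (cases k) auto
  have L: "(\<Prod>j=1..n. of_nat j + of_nat k :: rat) = fact (n + k) / fact k"
    using prod_of_nat_plus[where n = n and k = k] by (simp add: eq_divide_eq)
  have "(fact (n - k) :: rat) \<noteq> 0" "(fact k' :: rat) \<noteq> 0" by simp_all
  then show ?thesis
    unfolding L prod_of_nat_minus[OF assms] pf_coeff_def
    by (simp add: k fact_Suc field_simps power2_eq_square del: of_nat_Suc)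
qed

lemma degree_prod_linear_le: "degree (\<Prod>j\<in>A. [:c j, s:]) \<le> card A"
proof (cases "finite A")
  case True
  have "degree (\<Prod>j\<in>A. [:c j, s:]) \<le> (\<Sum>j\<in>A. degree [:c j, s:])"
    using degree_prod_sum_le[OF True, of "\<lambda>j. [:c j, s:]"] by (simp only: comp_def)
  also have "\<dots> \<le> (\<Sum>j\<in>A. 1)" by (intro sum_mono) simp
  finally show ?thesis by simp
qed simp

lemma degree_pf_sum_le:
  "degree (\<Sum>k=1..n. smult (pf_coeff n k) (\<Prod>j\<in>{1..n}-{k}. [:of_nat j, 1:])) \<le> n - 1"
proof (intro degree_sum_le)
  fix k assume "k \<in> {1..n}"
  then have "degree (\<Prod>j\<in>{1..n}-{k}. [:of_nat j :: rat, 1:]) \<le> n - 1"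
    using degree_prod_linear_le[where A = "{1..n}-{k}"] by simp
  then show "degree (smult (pf_coeff n k) (\<Prod>j\<in>{1..n}-{k}. [:of_nat j, 1:])) \<le> n - 1"
    by (rule order.trans[OF degree_smult_le])
qed simp

lemma poly_pf_sum_of_neg_nat:
  assumes "1 \<le> k" "k \<le> n"
  shows "poly (\<Sum>i=1..n. smult (pf_coeff n i) (\<Prod>j\<in>{1..n}-{i}. [:of_nat j, 1:])) (- of_nat k)
    = pf_coeff n k * (\<Prod>j\<in>{1..n}-{k}. of_nat j - of_nat k)"
proof -
  have "poly (\<Sum>i=1..n. smult (pf_coeff n i) (\<Prod>j\<in>{1..n}-{i}. [:of_nat j, 1:])) (- of_nat k)
      = (\<Sum>i=1..n. pf_coeff n i * (\<Prod>j\<in>{1..n}-{i}. of_nat j - of_nat k))"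
    by (simp add: poly_sum poly_prod)
  also have "\<dots> = pf_coeff n k * (\<Prod>j\<in>{1..n}-{k}. of_nat j - of_nat k)"
    using assms by (subst sum.remove[of _ k]) (auto intro!: sum.neutral prod_zero bexI[of _ k])
  finally show ?thesis .
qed

text \<open>Partial fractions of \<open>\<Prod>\<^sub>j (j - x) / \<Prod>\<^sub>j (j + x)\<close>; both sides have degree at most \<open>n\<close>
  and agree at \<open>0, -1, \<dots>, -n\<close>.\<close>
lemma partial_fraction_identity:
  "(\<Prod>j=1..n. [:of_nat j, -1:]) = (\<Prod>j=1..n. [:of_nat j, 1:])
     + [:0, 1:] * (\<Sum>k=1..n. smult (pf_coeff n k) (\<Prod>j\<in>{1..n}-{k}. [:of_nat j, 1:]))"
  (is "?P = ?Q + [:0, 1:] * ?S")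
proof (rule poly_eqI_degree[where A = "(\<lambda>k. - of_nat k) ` {0..n}"])
  have "card ((\<lambda>k. - of_nat k :: rat) ` {0..n}) = n + 1"
    by (subst card_image) (auto simp: inj_on_def)
  moreover have "degree ?P \<le> n" "degree ?Q \<le> n"
    using degree_prod_linear_le[where A = "{1..n}"] by simp_all
  moreover have "degree ([:0, 1:] * ?S) \<le> n"
    using degree_pf_sum_le[of n] by (cases "?S = 0"; cases n) (auto simp: mult_pCons_left)
  ultimately show "degree ?P < card ((\<lambda>k. - of_nat k :: rat) ` {0..n})"
    and "degree (?Q + [:0, 1:] * ?S) < card ((\<lambda>k. - of_nat k :: rat) ` {0..n})"
    by (auto intro: le_less_trans[OF degree_add_le])
  fix z :: rat assume "z \<in> (\<lambda>k. - of_nat k) ` {0..n}"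
  then obtain k where k: "k \<le> n" "z = - of_nat k" by auto
  show "poly ?P z = poly (?Q + [:0, 1:] * ?S) z"
  proof (cases "k = 0")
    case True
    then show ?thesis using k by (simp add: poly_prod)
  next
    case False
    then have k1: "1 \<le> k" by simp
    have "poly ?Q z = 0"
      using k k1 unfolding poly_prod by (intro prod_zero) (auto intro!: bexI[of _ k])
    then have "poly (?Q + [:0, 1:] * ?S) z = - of_nat k * pf_coeff n k * (\<Prod>j\<in>{1..n}-{k}. of_nat j - of_nat k)"
      unfolding poly_add poly_mult k(2) poly_pf_sum_of_neg_nat[OF k1 k(1)] by simp
    also have "\<dots> = poly ?P z"
      unfolding pf_coeff_residue[OF k1 k(1), symmetric] using k by (simp add: poly_prod)
    finally show ?thesis ..
  qed
qed

lemma coeffs_prod_linear: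
  fixes a :: "'b \<Rightarrow> 'a :: field_char_0"
  assumes "finite A" "\<And>j. j \<in> A \<Longrightarrow> a j \<noteq> 0"
  shows "coeff (\<Prod>j\<in>A. [:a j, s:]) 0 = (\<Prod>j\<in>A. a j)" (is ?c0)
    and "coeff (\<Prod>j\<in>A. [:a j, s:]) 1 = s * (\<Prod>j\<in>A. a j) * (\<Sum>j\<in>A. 1 / a j)" (is ?c1)
    and "coeff (\<Prod>j\<in>A. [:a j, s:]) 2
           = s^2 * (\<Prod>j\<in>A. a j) * ((\<Sum>j\<in>A. 1 / a j)^2 - (\<Sum>j\<in>A. (1 / a j)^2)) / 2" (is ?c2)
proof -
  have "?c0 \<and> ?c1 \<and> ?c2"
    using assms
  proof (induction A rule: finite_induct)
    case (insert x F)
    define L where "L = (\<Prod>j\<in>F. [:a j, s:])"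
    have eq: "(\<Prod>j\<in>insert x F. [:a j, s:]) = [:a x, s:] * L"
      unfolding L_def using insert by simp
    have c: "coeff [:a x, s:] 0 = a x" "coeff [:a x, s:] 1 = s" "coeff [:a x, s:] 2 = 0"
      by (simp_all add: numeral_2_eq_2)
    define P where "P = (\<Prod>j\<in>F. a j)"
    define \<sigma> where "\<sigma> = (\<Sum>j\<in>F. 1 / a j)"
    define \<tau> where "\<tau> = (\<Sum>j\<in>F. (1 / a j)^2)"
    have IH: "coeff L 0 = P" "coeff L 1 = s * P * \<sigma>" "coeff L 2 = s^2 * P * (\<sigma>^2 - \<tau>) / 2"
      using insert unfolding L_def P_def \<sigma>_def \<tau>_def by auto
    have "a x \<noteq> 0" using insert by simp
    then show ?case
      using insert unfolding eq coeff_mult_0_1_2 c IH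
      by (simp add: P_def \<sigma>_def \<tau>_def field_simps power2_eq_square)
  qed (simp add: numeral_2_eq_2)
  then show ?c0 ?c1 ?c2 by blast+
qed

lemma coeffs_prod_plus_except:
  assumes "k \<in> {1..n}"
  shows "coeff (\<Prod>j\<in>{1..n}-{k}. [:of_nat j, 1:]) 0 = (fact n / of_nat k :: rat)"
    and "coeff (\<Prod>j\<in>{1..n}-{k}. [:of_nat j, 1:]) 1 = fact n / of_nat k * (harm n - 1 / of_nat k)"
proof -
  have k: "(of_nat k :: rat) \<noteq> 0" using assms by simp
  have "fact n = of_nat k * (\<Prod>j\<in>{1..n}-{k}. of_nat j :: rat)"
    unfolding fact_prod of_nat_prod using assms by (subst prod.remove) auto
  then have "(\<Prod>j\<in>{1..n}-{k}. of_nat j :: rat) = fact n / of_nat k"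
    using k by (simp add: field_simps)
  moreover have "harm n = 1 / of_nat k + (\<Sum>j\<in>{1..n}-{k}. 1 / of_nat j)"
    unfolding harm_def using assms by (subst sum.remove) auto
  ultimately show "coeff (\<Prod>j\<in>{1..n}-{k}. [:of_nat j, 1:]) 0 = (fact n / of_nat k :: rat)"
    and "coeff (\<Prod>j\<in>{1..n}-{k}. [:of_nat j, 1:]) 1 = fact n / of_nat k * (harm n - 1 / of_nat k)"
    using coeffs_prod_linear[of "{1..n}-{k}" "\<lambda>j. of_nat j :: rat" 1] by auto
qed

text \<open>Compare the coefficients of \<open>x\<close> and \<open>x\<^sup>2\<close> in the partial fraction identity.\<close>
lemma partial_fraction_sums:
  shows "(\<Sum>k=1..n. pf_coeff n k / of_nat k) = -2 * harm n"
    and "(\<Sum>k=1..n. pf_coeff n k / (of_nat k)^2) = -2 * (harm n)^2"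
proof -
  define F where "F = (fact n :: rat)"
  define H2 where "H2 = (\<Sum>j=1..n. (1 / of_nat j :: rat)^2)"
  define S where "S = (\<Sum>k=1..n. smult (pf_coeff n k) (\<Prod>j\<in>{1..n}-{k}. [:of_nat j, 1:]))"
  have F: "F \<noteq> 0" "(\<Prod>j=1..n. of_nat j :: rat) = F"
    unfolding F_def by (simp_all add: fact_prod)
  have nz: "\<And>j. j \<in> {1..n} \<Longrightarrow> (of_nat j :: rat) \<noteq> 0" by auto
  note P = coeffs_prod_linear[of "{1..n}" "\<lambda>j. of_nat j :: rat" "-1", OF _ nz,
      unfolded F, folded harm_def H2_def]
  note Q = coeffs_prod_linear[of "{1..n}" "\<lambda>j. of_nat j :: rat" 1, OF _ nz,
      unfolded F, folded harm_def H2_def]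
  have S0: "coeff S 0 = F * (\<Sum>k=1..n. pf_coeff n k / of_nat k)"
    and S1: "coeff S 1 = F * (\<Sum>k=1..n. pf_coeff n k / of_nat k * (harm n - 1 / of_nat k))"
    unfolding S_def F_def coeff_sum sum_distrib_left
    by (auto intro!: sum.cong simp: coeffs_prod_plus_except simp del: One_nat_def)
  have id: "(\<Prod>j=1..n. [:of_nat j, -1:]) = (\<Prod>j=1..n. [:of_nat j, 1:]) + pCons 0 S"
    using partial_fraction_identity[of n] unfolding S_def by (simp add: mult_pCons_left)
  have "F * (- harm n) = F * harm n + coeff S 0"
    using arg_cong[OF id, of "\<lambda>q. coeff q 1"] P(2) Q(2) by simp
  then have "F * ((\<Sum>k=1..n. pf_coeff n k / of_nat k) + 2 * harm n) = 0"
    unfolding S0 by (simp add: algebra_simps)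
  then show A: "(\<Sum>k=1..n. pf_coeff n k / of_nat k) = -2 * harm n"
    using F(1) by (simp add: eq_neg_iff_add_eq_0)
  have "coeff S 1 = 0"
    using arg_cong[OF id, of "\<lambda>q. coeff q 2"] P(3) Q(3) by (simp add: numeral_2_eq_2)
  then have "(\<Sum>k=1..n. harm n * (pf_coeff n k / of_nat k) - pf_coeff n k / (of_nat k)^2) = 0"
    using F(1) unfolding S1 by (simp add: algebra_simps power2_eq_square)
  then show "(\<Sum>k=1..n. pf_coeff n k / (of_nat k)^2) = -2 * (harm n)^2"
    unfolding sum_subtractf sum_distrib_left[symmetric] A by (simp add: power2_eq_square)
qed

lemma poly_f_poly_of_nat:
  assumes "n \<le> m"
  shows "poly (f_poly m) (of_nat n) = -2 * harm n"
proof -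
  have "poly (f_poly m) (of_nat n) = (\<Sum>k=1..n. c_coeff k * poly (D_poly k) (of_nat n))"
    unfolding poly_f_poly using assms
    by (intro sum.mono_neutral_right) (auto simp: poly_D_poly_of_nat_eq_0)
  also have "\<dots> = (\<Sum>k=1..n. pf_coeff n k / of_nat k)"
    by (rule sum.cong) (simp_all add: c_coeff_mult_D_poly_of_nat)
  also have "\<dots> = -2 * harm n" by (rule partial_fraction_sums(1))
  finally show ?thesis .
qed

lemma sum_c_coeff_D_poly_of_nat:
  assumes "n \<le> m"
  shows "(\<Sum>k=1..m. c_coeff k / of_nat k * poly (D_poly k) (of_nat n)) = -2 * (harm n)^2"
proof -
  have "(\<Sum>k=1..m. c_coeff k / of_nat k * poly (D_poly k) (of_nat n))
      = (\<Sum>k=1..n. c_coeff k / of_nat k * poly (D_poly k) (of_nat n))"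
    using assms by (intro sum.mono_neutral_right) (auto simp: poly_D_poly_of_nat_eq_0)
  also have "\<dots> = (\<Sum>k=1..n. pf_coeff n k / (of_nat k)^2)"
  proof (rule sum.cong)
    fix k assume "k \<in> {1..n}"
    then show "c_coeff k / of_nat k * poly (D_poly k) (of_nat n) = pf_coeff n k / (of_nat k)^2"
      using c_coeff_mult_D_poly_of_nat[of k n] by (simp add: power2_eq_square)
  qed simp
  also have "\<dots> = -2 * (harm n)^2" by (rule partial_fraction_sums(2))
  finally show ?thesis .
qed

section \<open>Congruences modulo \<open>p\<close>\<close>

lemma sum_inverse_cubes_p_multiple:
  assumes p: "prime p" "p > 2"
  shows "p_multiple p 1 (\<Sum>k=1..p-1. 1 / (of_nat k)^3 :: rat)"
proof -
  define f where "f k = (1 / (of_nat k)^3 :: rat)" for k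
  have pair: "p_multiple p 1 (f k + f (p - k))" if k: "k \<in> {1..p-1}" for k
  proof -
    define q where "q = p - k"
    have pq: "(of_nat p :: rat) = of_nat k + of_nat q" and "q > 0"
      using k unfolding q_def by auto
    then have eq: "f k + f (p - k)
        = of_nat p ^ 1 * (((of_nat k)^2 - of_nat k * of_nat q + (of_nat q)^2) / of_nat (k^3 * q^3))"
      using k unfolding f_def q_def[symmetric] pq by (simp add: field_simps power3_eq_cube power2_eq_square)
    have "\<not> p dvd k^3 * q^3"
      using k p(1) unfolding q_def by (auto simp: prime_dvd_mult_iff prime_dvd_power_iff dest: dvd_imp_le)
    then have "p_integral p (((of_nat k)^2 - of_nat k * of_nat q + (of_nat q)^2) / of_nat (k^3 * q^3))"
      by (intro p_integral_divide_of_nat[OF p(1)] p_integral_add p_integral_diff p_integral_mult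
          p_integral_power p_integral_of_nat)
    then show ?thesis unfolding eq by (rule p_multiple_of_nat_power)
  qed
  have rev: "(\<Sum>k=1..p-1. f k) = (\<Sum>k=1..p-1. f (p - k))"
    using sum.atLeastAtMost_rev[of f 1 "p - 1"] p by simp
  then have "2 * (\<Sum>k=1..p-1. f k) = (\<Sum>k=1..p-1. f k + f (p - k))"
    by (subst mult_2, subst (2) rev) (simp add: sum.distrib)
  also have "p_multiple p 1 \<dots>" by (rule p_multiple_sum) (rule pair)
  finally have "p_multiple p 1 (2 * (\<Sum>k=1..p-1. f k) / of_nat 2)"
    by (rule p_multiple_divide_of_nat[OF p(1)]) (use p in \<open>auto dest: dvd_imp_le simp: prime_nat_iff\<close>)
  then show ?thesis unfolding f_def by simp
qed

lemma prod_shift_cong: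
  assumes "0 < x" "x < p"
  shows "[(\<Prod>j\<in>{1..p-1}-{p-x}. int j + int x) = (\<Prod>r\<in>{1..p-1}-{x}. int r)] (mod int p)"
proof -
  define D where "D = {1..p-1}-{p-x}"
  define R where "R = {1..p-1}-{x}"
  define g where "g j = (if j + x < p then j + x else j + x - p)" for j
  have "g ` D \<subseteq> R"
    using assms unfolding g_def D_def R_def by (auto split: if_splits)
  moreover have "inj_on g D"
    using assms unfolding g_def D_def inj_on_def by (auto split: if_splits)
  moreover have "card D = p - 2" "card R = p - 2"
    using assms unfolding D_def R_def by (subst card_Diff_singleton; auto)+
  ultimately have "bij_betw g D R"
    unfolding bij_betw_def by (simp add: card_image card_subset_eq R_def)
  then have "(\<Prod>r\<in>R. int r) = (\<Prod>j\<in>D. int (g j))"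
    by (simp add: prod.reindex_bij_betw)
  moreover have "[(\<Prod>j\<in>D. int j + int x) = (\<Prod>j\<in>D. int (g j))] (mod int p)"
    by (rule cong_prod) (simp add: g_def cong_iff_dvd_diff of_nat_diff)
  ultimately show ?thesis unfolding D_def R_def by simp
qed

lemma wilson_except:
  assumes "prime p" "0 < x" "x < p"
  shows "[int x * (\<Prod>r\<in>{1..p-1}-{x}. int r) = -1] (mod int p)"
proof -
  have "int x * (\<Prod>r\<in>{1..p-1}-{x}. int r) = (\<Prod>r=1..p-1. int r)"
    using assms by (subst (2) prod.remove[of _ x]) auto
  then show ?thesis using wilson_theorem[OF assms(1)] by (simp add: fact_prod)
qed

lemma wilson_except_shifted:
  assumes "prime p" "0 < x" "x < p"
  shows "[int x * (\<Prod>j\<in>{1..p-1}-{p-x}. int j + int x) = -1] (mod int p)"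
  using cong_trans[OF cong_scalar_left[OF prod_shift_cong[OF assms(2,3)]] wilson_except[OF assms]] .

lemma cong_add_mult_modulus_iff: "[a + m * b = c] (mod m) \<longleftrightarrow> [a = c] (mod m)" for a b c m :: int
  by (simp add: cong_def)

lemma prod_except_pair_cong:
  assumes "prime p" "0 < x" "x < p" "2 * x \<noteq> p"
  shows "[int x^2 * (\<Prod>j\<in>{1..p-1}-{x, p-x}. int j) = 1] (mod int p)"
proof -
  have prod_eq: "(\<Prod>r\<in>{1..p-1}-{x}. int r) = int (p - x) * (\<Prod>j\<in>{1..p-1}-{x, p-x}. int j)"
    using assms by (subst prod.remove[of _ "p - x"]) (auto intro!: prod.cong)
  have "int x * (\<Prod>r\<in>{1..p-1}-{x}. int r)
      = - (int x^2 * (\<Prod>j\<in>{1..p-1}-{x, p-x}. int j)) + int p * (int x * (\<Prod>j\<in>{1..p-1}-{x, p-x}. int j))"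
    unfolding prod_eq using assms by (simp add: of_nat_diff algebra_simps power2_eq_square)
  with wilson_except[OF assms(1-3)] show ?thesis
    by (simp only: cong_add_mult_modulus_iff cong_minus_minus_iff)
qed

lemma prod_plus_except_pair_cong:
  assumes "prime p" "0 < x" "x < p" "2 * x \<noteq> p"
  shows "[2 * int x^2 * (\<Prod>j\<in>{1..p-1}-{x, p-x}. int j + int x) = -1] (mod int p)"
proof -
  have "(\<Prod>j\<in>{1..p-1}-{p-x}. int j + int x) = (int x + int x) * (\<Prod>j\<in>{1..p-1}-{x, p-x}. int j + int x)"
    using assms by (subst prod.remove[of _ x]) (auto intro!: prod.cong)
  with wilson_except_shifted[OF assms(1-3)] show ?thesis
    by (simp add: algebra_simps power2_eq_square)
qed

text \<open>The set \<open>{1..p-1} - {x, p-x}\<close> is symmetric under \<open>x \<mapsto> p - x\<close>, and \<open>p - x \<equiv> -x\<close>.\<close>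
lemma prod_minus_except_pair_cong:
  assumes "prime p" "0 < x" "x < p" "2 * x \<noteq> p"
  shows "[2 * int x^2 * (\<Prod>j\<in>{1..p-1}-{x, p-x}. int j - int x) = -1] (mod int p)"
proof -
  have sets: "{1..p-1}-{p - x, p - (p - x)} = {1..p-1}-{x, p-x}" using assms by auto
  have "0 < p - x" "p - x < p" "2 * (p - x) \<noteq> p" using assms by auto
  from prod_plus_except_pair_cong[OF assms(1) this, unfolded sets]
  have plus: "[2 * int (p - x)^2 * (\<Prod>j\<in>{1..p-1}-{x, p-x}. int j + int (p - x)) = -1] (mod int p)" .
  have neg: "[int (p - x) = - int x] (mod int p)"
    using assms by (simp add: cong_iff_dvd_diff of_nat_diff)
  have "[2 * int (p - x)^2 = 2 * int x^2] (mod int p)"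
    using cong_scalar_left[OF cong_pow[OF neg, of 2], of 2] by simp
  moreover have "[(\<Prod>j\<in>{1..p-1}-{x, p-x}. int j + int (p - x))
      = (\<Prod>j\<in>{1..p-1}-{x, p-x}. int j - int x)] (mod int p)"
    using assms by (intro cong_prod) (simp add: cong_iff_dvd_diff of_nat_diff)
  ultimately have "[2 * int (p - x)^2 * (\<Prod>j\<in>{1..p-1}-{x, p-x}. int j + int (p - x))
      = 2 * int x^2 * (\<Prod>j\<in>{1..p-1}-{x, p-x}. int j - int x)] (mod int p)"
    by (rule cong_mult)
  with plus show ?thesis using cong_sym cong_trans by blast
qed

lemma prod_except_pair_square_cong:
  assumes p: "prime p" and x: "0 < x" "2 * x < p"
  defines "S \<equiv> {1..p-1} - {x, p - x}"
  shows "[4 * (\<Prod>j\<in>S. int j - int x) * (\<Prod>j\<in>S. int j + int x) = (\<Prod>j\<in>S. int j)^2] (mod int p)"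
proof -
  have x': "0 < x" "x < p" "2 * x \<noteq> p" using x by auto
  have "[(2 * int x^2 * (\<Prod>j\<in>S. int j - int x)) * (2 * int x^2 * (\<Prod>j\<in>S. int j + int x))
      - (int x^2 * (\<Prod>j\<in>S. int j))^2 = (-1) * (-1) - 1^2] (mod int p)"
    unfolding S_def using prod_minus_except_pair_cong[OF p x'] prod_plus_except_pair_cong[OF p x']
      prod_except_pair_cong[OF p x'] by (intro cong_diff cong_mult cong_pow)
  then have "int p dvd int x^4 * (4 * (\<Prod>j\<in>S. int j - int x) * (\<Prod>j\<in>S. int j + int x) - (\<Prod>j\<in>S. int j)^2)"
    by (simp add: cong_iff_dvd_diff algebra_simps power2_eq_square power4_eq_xxxx)
  moreover have "\<not> int p dvd int x^4"
    using p x' by (auto simp: prime_dvd_power_iff int_dvd_int_iff dest: dvd_imp_le)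
  ultimately show ?thesis
    using p by (simp add: prime_dvd_mult_iff cong_iff_dvd_diff)
qed

lemma coprime_int_less_prime:
  assumes "prime p" "0 < j" "j < p"
  shows "coprime (int j) (int p)"
  using assms by (metis coprime_commute coprime_int_iff dvd_imp_le not_le prime_imp_coprime_nat)

lemma p_multiple_four_prod_except_pair:
  assumes p: "prime p" and x: "0 < x" "2 * x < p"
  shows "p_multiple p 1 (4 * (\<Prod>j\<in>{1..p-1} - {x, p - x}. 1 - (of_nat x)^2 / (of_nat j)^2 :: rat) - 1)"
proof -
  define S where "S = {1..p-1} - {x, p - x}"
  define A where "A = (\<Prod>j\<in>S. int j - int x)"
  define B where "B = (\<Prod>j\<in>S. int j + int x)"
  define C where "C = (\<Prod>j\<in>S. int j)"
  obtain k where k: "4 * A * B - C^2 = int p * k"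
    using prod_except_pair_square_cong[OF assms] unfolding A_def B_def C_def S_def
    by (metis cong_iff_dvd_diff dvdE)
  have "(\<Prod>j\<in>S. 1 - (of_nat x)^2 / (of_nat j)^2 :: rat)
      = (\<Prod>j\<in>S. of_int ((int j - int x) * (int j + int x)) / of_int (int j * int j))"
    by (rule prod.cong) (auto simp: S_def field_simps power2_eq_square)
  also have "\<dots> = of_int (A * B) / of_int (C^2)"
    unfolding prod_dividef A_def B_def C_def of_int_prod[symmetric] prod.distrib power2_eq_square by simp
  moreover have "C \<noteq> 0" unfolding C_def S_def by (simp add: prod_zero_iff)
  then have "4 * (of_int (A * B) / of_int (C^2)) - 1 = (of_int (4 * A * B - C^2) / of_int (C^2) :: rat)"
    by (simp add: field_simps)
  ultimately have "4 * (\<Prod>j\<in>S. 1 - (of_nat x)^2 / (of_nat j)^2 :: rat) - 1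
      = of_nat p ^ 1 * (of_int k / of_int (C^2))"
    unfolding k by simp
  moreover have "coprime C (int p)"
    unfolding C_def by (rule prod_coprime_left, rule coprime_int_less_prime[OF p]) (auto simp: S_def)
  then have "coprime (C^2) (int p)" by simp
  ultimately show ?thesis
    unfolding S_def by (metis p_integral_divide_of_int p_integral_of_int p_multiple_of_nat_power)
qed

section \<open>The quadratic Taylor coefficient at \<open>-1/2\<close>\<close>

lemma coeff_2_of_linear_factor_identity:
  fixes Phi P :: "'a :: comm_ring_1 poly"
  assumes "[:a, 1:] * Phi = smult 2 (P - 1)"
  shows "a^3 * coeff Phi 2 = 2 * (a^2 * coeff P 2 - 1) - 2 * a * coeff P 1 + 2 * coeff P 0"
proof -
  have c0: "a * coeff Phi 0 = 2 * (coeff P 0 - 1)"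
    using arg_cong[OF assms, of "\<lambda>q. coeff q 0"] by (simp add: coeff_mult_0_1_2)
  have c1: "a * coeff Phi 1 = 2 * coeff P 1 - coeff Phi 0"
    using arg_cong[OF assms, of "\<lambda>q. coeff q 1"] by (simp add: coeff_mult_0_1_2 algebra_simps)
  have c2: "a * coeff Phi 2 = 2 * coeff P 2 - coeff Phi 1"
    using arg_cong[OF assms, of "\<lambda>q. coeff q 2"] by (simp add: numeral_2_eq_2 algebra_simps)
  have "a^3 * coeff Phi 2 = 2 * a^2 * coeff P 2 - a * (a * coeff Phi 1)"
    by (simp add: power2_eq_square power3_eq_cube c2 algebra_simps)
  also have "\<dots> = 2 * a^2 * coeff P 2 - 2 * a * coeff P 1 + a * coeff Phi 0"
    unfolding c1 by (simp add: algebra_simps)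
  also have "\<dots> = 2 * (a^2 * coeff P 2 - 1) - 2 * a * coeff P 1 + 2 * coeff P 0"
    unfolding c0 by (simp add: algebra_simps)
  finally show ?thesis .
qed

lemma pcompose_quadratic_linear:
  "pcompose [:1, 0, c:] [:a, 1:] = [:1 + c * a^2, 2 * c * a, c :: 'a :: comm_ring_1:]"
  by (simp add: pcompose_pCons algebra_simps power2_eq_square)

lemma p_multiple_one_minus_square_ratio:
  assumes p: "prime p" and x: "0 < x" "x < p"
  shows "p_multiple p 1 (1 - (of_nat x)^2 / (of_nat (p - x))^2 :: rat)"
proof -
  define q where "q = p - x"
  have "(of_nat q :: rat) \<noteq> 0" "(of_nat p :: rat) = of_nat q + of_nat x"
    using x unfolding q_def by simp_all
  then have "(1 - (of_nat x)^2 / (of_nat (p - x))^2 :: rat)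
      = of_nat p ^ 1 * ((of_nat (p - x) - of_nat x) / of_nat ((p - x)^2))"
    unfolding q_def[symmetric] by (simp add: field_simps power2_eq_square)
  moreover have "\<not> p dvd (p - x)^2"
    using p x by (auto simp: prime_dvd_power_iff dest: dvd_imp_le)
  ultimately show ?thesis
    using p by (metis p_integral_diff p_integral_divide_of_nat p_integral_of_nat p_multiple_of_nat_power)
qed

definition Pi_factor :: "rat \<Rightarrow> nat \<Rightarrow> rat poly" where
  "Pi_factor a j = [:1 - a^2 / (of_nat j)^2, - 2 * a / (of_nat j)^2, - 1 / (of_nat j)^2:]"

lemma pcompose_Pi_poly: "pcompose (Pi_poly m) [:a, 1:] = (\<Prod>j=1..m. Pi_factor a j)"
  unfolding Pi_poly_def pcompose_prod Pi_factor_def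
  by (rule prod.cong) (simp_all add: pcompose_quadratic_linear)

lemma poly_p_integral_Pi_factor:
  assumes "prime p" "0 < j" "j < p" "p_integral p a"
  shows "poly_p_integral p (Pi_factor a j)"
proof -
  have "\<not> p dvd j^2" using assms by (auto simp: prime_dvd_power_iff dest: dvd_imp_le)
  then show ?thesis
    unfolding Pi_factor_def using assms
    by (auto intro!: p_integral_divide_of_nat[where k = "j^2", simplified] p_integral_diff p_integral_mult
        p_integral_power)
qed

text \<open>Among the factors of \<open>\<Pi>(X + x)\<close>, the one for \<open>j = x\<close> has no constant term and the one for
  \<open>j = p - x\<close> has constant term divisible by \<open>p\<close>.\<close>
lemma coeffs_Pi_poly_shift:
  assumes p: "prime p" and x: "0 < x" "2 * x < p"
  defines "P \<equiv> pcompose (Pi_poly (p - 1)) [:of_nat x, 1:]"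
  shows "coeff P 0 = 0"
    and "p_multiple p 1 (coeff P 1)"
    and "p_multiple p 1 ((of_nat x)^2 * coeff P 2 - 1)"
proof -
  define a where "a = (of_nat x :: rat)"
  define y where "y = p - x"
  define S where "S = {1..p-1} - {x, y}"
  define R where "R = (\<Prod>j\<in>S. Pi_factor a j)"
  define b0 where "b0 = coeff (Pi_factor a y) 0"
  have a: "a \<noteq> 0" "p_integral p a" "p_integral p (1 / a)"
    using p x unfolding a_def by (auto intro: p_integral_inverse_of_nat_less)
  have "{1..p-1} = insert x (insert y S)" "finite S" "x \<notin> insert y S" "y \<notin> S"
    unfolding S_def y_def using x by auto
  then have P: "P = Pi_factor a x * (Pi_factor a y * R)"
    unfolding P_def pcompose_Pi_poly R_def a_def[symmetric] by simp
  have Ex: "Pi_factor a x = [:0, - 2 * (1 / a), - (1 / a) * (1 / a):]"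
    using a(1) unfolding Pi_factor_def a_def by (simp add: power2_eq_square)
  have "poly_p_integral p R"
    unfolding R_def by (rule poly_p_integral_prod, rule poly_p_integral_Pi_factor[OF p _ _ a(2)])
      (auto simp: S_def y_def)
  then have R: "p_integral p (coeff R 0)" "p_integral p (coeff R 1)"
    unfolding poly_p_integral_def by auto
  have b0: "p_multiple p 1 b0"
    using p_multiple_one_minus_square_ratio[OF p x(1)] x unfolding b0_def Pi_factor_def a_def y_def by simp
  show "coeff P 0 = 0" unfolding P Ex coeff_mult_0_1_2 by simp
  have "coeff P 1 = b0 * coeff R 0 * (- 2 * (1 / a))"
    unfolding P Ex coeff_mult_0_1_2 b0_def by simp
  then show "p_multiple p 1 (coeff P 1)"
    using a b0 R by (simp only:) (intro p_multiple_mult_right p_integral_mult; simp)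
  have "(of_nat y :: rat) \<noteq> 0" using x unfolding y_def by simp
  then have "(of_nat x)^2 * coeff P 2 - 1 = b0 * (- 2 * a * coeff R 1 - 5 * coeff R 0) + (4 * coeff R 0 - 1)"
    using a(1) unfolding P Ex coeff_mult_0_1_2 a_def[symmetric] b0_def
    by (simp add: Pi_factor_def numeral_2_eq_2 field_simps power2_eq_square)
  also have "p_multiple p 1 \<dots>"
    using p_multiple_four_prod_except_pair[OF p x] b0 a R
    unfolding R_def poly_0_coeff_0[symmetric] poly_prod S_def y_def a_def Pi_factor_def
    by (intro p_multiple_add p_multiple_mult_right) (auto intro!: p_integral_diff p_integral_mult)
  finally show "p_multiple p 1 ((of_nat x)^2 * coeff P 2 - 1)" .
qed

lemma p_multiple_coeff_2_f_poly_step: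
  assumes p: "prime p" and x: "0 < x" "2 * x < p"
  shows "p_multiple p 1 (coeff (pcompose (f_poly (p - 1)) [:of_nat x, 1:]
                                - pcompose (f_poly (p - 1)) [:of_nat x - 1, 1:]) 2)"
proof -
  define a where "a = (of_nat x :: rat)"
  define Phi where "Phi = pcompose (f_poly (p - 1)) [:a, 1:] - pcompose (f_poly (p - 1)) [:a - 1, 1:]"
  define P where "P = pcompose (Pi_poly (p - 1)) [:a, 1:]"
  have "[:a, 1:] * Phi = smult 2 (P - 1)"
  proof (rule poly_eq_poly_eq_iff[THEN iffD1], rule ext)
    fix z
    show "poly ([:a, 1:] * Phi) z = poly (smult 2 (P - 1)) z"
      using f_poly_difference[of "a + z" "p - 1"] by (simp add: Phi_def P_def poly_pcompose algebra_simps)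
  qed
  then have "a^3 * coeff Phi 2 = 2 * (a^2 * coeff P 2 - 1) - 2 * a * coeff P 1 + 2 * coeff P 0"
    by (rule coeff_2_of_linear_factor_identity)
  also have "p_multiple p 1 \<dots>"
  proof -
    note c = coeffs_Pi_poly_shift[OF p x, folded a_def, folded P_def]
    have "p_multiple p 1 (2 * (a^2 * coeff P 2 - 1))" using c(3) by (rule p_multiple_mult_left[rotated]) simp
    moreover have "p_multiple p 1 (2 * a * coeff P 1)"
      using c(2) by (rule p_multiple_mult_left[rotated]) (simp add: a_def p_integral_mult)
    ultimately show ?thesis unfolding c(1) by (intro p_multiple_add p_multiple_diff) simp_all
  qed
  finally have "p_multiple p 1 (a^3 * coeff Phi 2 * (1 / a)^3)"
    by (rule p_multiple_mult_right)
      (use p x in \<open>auto simp: a_def intro!: p_integral_power p_integral_inverse_of_nat_less\<close>)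
  then show ?thesis
    using x unfolding Phi_def a_def by (simp add: power_one_over)
qed

lemma coeff_pcompose_shift_telescope:
  fixes f :: "'a :: comm_ring_1 poly"
  shows "coeff (pcompose f [:of_nat t, 1:]) i
    = coeff f i + (\<Sum>x=1..t. coeff (pcompose f [:of_nat x, 1:] - pcompose f [:of_nat x - 1, 1:]) i)"
  by (induction t) (simp_all add: pcompose_pCons)

lemma p_integral_c_coeff:
  assumes "prime p" "0 < k" "k < p"
  shows "p_integral p (c_coeff k)"
proof -
  have "\<not> p dvd k * (fact k)^2"
    using assms by (auto simp: prime_dvd_mult_iff prime_dvd_power_iff prime_dvd_fact_iff dest: dvd_imp_le)
  then have "p_integral p ((-1)^k / of_nat (k * (fact k)^2))"
    by (intro p_integral_divide_of_nat[OF assms(1)]) auto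
  then show ?thesis unfolding c_coeff_def by simp
qed

lemma poly_p_integral_f_poly: "prime p \<Longrightarrow> poly_p_integral p (f_poly (p - 1))"
  unfolding f_poly_def D_poly_def
  by (intro poly_p_integral_sum poly_p_integral_smult poly_p_integral_prod poly_p_integral_mult
      p_integral_c_coeff) auto

lemma p_multiple_coeff_2_f_poly_half_shift:
  assumes p: "prime p" "p > 2"
  shows "p_multiple p 1 (coeff (pcompose (f_poly (p - 1)) [:-1/2, 1:]) 2)"
proof -
  define n where "n = (p - 1) div 2"
  define f where "f = f_poly (p - 1)"
  have pn: "p = 2 * n + 1" using p prime_odd_nat[OF p(1)] unfolding n_def by auto
  have half: "p_integral p (1/2)" by (rule p_integral_half[OF p])
  have f: "poly_p_integral p f" unfolding f_def by (rule poly_p_integral_f_poly[OF p(1)])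
  have "p_multiple p 1 (coeff f 2)"
    unfolding f_def coeff_f_poly_2 using sum_inverse_cubes_p_multiple[OF p] by simp
  moreover have "p_multiple p 1 (coeff (pcompose f [:of_nat x, 1:] - pcompose f [:of_nat x - 1, 1:]) 2)"
    if "x \<in> {1..n}" for x
    using p_multiple_coeff_2_f_poly_step[OF p(1), of x] that pn unfolding f_def by simp
  ultimately have "p_multiple p 1 (coeff (pcompose f [:of_nat n, 1:]) 2)"
    unfolding coeff_pcompose_shift_telescope by blast
  moreover have "poly_p_multiple p 1 (pcompose f [:-1/2, 1:] - pcompose f [:of_nat n, 1:])"
  proof (rule poly_p_multiple_pcompose_diff[OF f])
    have "[:-1/2, 1:] - [:of_nat n, 1:] = [:of_nat p ^ 1 * (- (1/2)) :: rat:]"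
      unfolding pn by (simp add: field_simps)
    moreover have "p_multiple p 1 (of_nat p ^ 1 * (- (1/2)) :: rat)"
      using half by (intro p_multiple_of_nat_power) simp
    ultimately show "poly_p_multiple p 1 ([:-1/2, 1:] - [:of_nat n, 1:])"
      by (simp only: poly_p_multiple_pCons poly_p_multiple_0)
  qed (use half in auto)
  ultimately show ?thesis
    unfolding f_def poly_p_multiple_def
    by (metis (no_types, lifting) coeff_diff diff_add_cancel p_multiple_add)
qed

lemma hypergeometric_term_eq_c_coeff_D_poly:
  "(pochhammer (1/2 :: rat) k)^2 / (pochhammer 1 k)^2 * (1 / of_nat k) = c_coeff k * poly (D_poly k) (-1/2)"
  unfolding poly_D_poly_minus_half c_coeff_def pochhammer_fact[symmetric]
  by (simp add: field_simps power_mult_distrib[symmetric])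

lemma hypergeometric_square_term_eq_c_coeff_D_poly:
  "(pochhammer (1/2 :: rat) k)^2 / (pochhammer 1 k)^2 * (1 / (of_nat k)^2)
    = c_coeff k / of_nat k * poly (D_poly k) (-1/2)"
proof -
  have "(pochhammer (1/2 :: rat) k)^2 / (pochhammer 1 k)^2 * (1 / (of_nat k)^2)
      = (pochhammer (1/2 :: rat) k)^2 / (pochhammer 1 k)^2 * (1 / of_nat k) * (1 / of_nat k)"
    by (simp add: power2_eq_square)
  then show ?thesis unfolding hypergeometric_term_eq_c_coeff_D_poly by simp
qed

lemma p_multiple_D_poly_minus_half_diff:
  assumes p: "prime p" "p > 2"
  shows "p_multiple p 2 (poly (D_poly k) (-1/2) - poly (D_poly k) (of_nat ((p - 1) div 2)))"
proof -
  define n where "n = (p - 1) div 2"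
  have pn: "(of_nat p :: rat) = 2 * of_nat n + 1"
    using p prime_odd_nat[OF p(1)] unfolding n_def by (auto elim!: oddE)
  have half: "p_integral p (1/2)" by (rule p_integral_half[OF p])
  have "p_multiple p 2
      ((-1/2 - of_nat j) * (-1/2 + of_nat j + 1) - (of_nat n - of_nat j) * (of_nat n + of_nat j + 1))"
    for j
  proof -
    have "(-1/2 - of_nat j) * (-1/2 + of_nat j + 1) - (of_nat n - of_nat j) * (of_nat n + of_nat j + 1)
        = (of_nat p)^2 * (- (1/2) * (1/2 :: rat))"
      unfolding pn by (simp add: field_simps power2_eq_square)
    then show ?thesis using half by (simp only:) (intro p_multiple_of_nat_power p_integral_mult; simp)
  qed
  then show ?thesis
    unfolding poly_D_poly n_def[symmetric] using half
    by (intro p_multiple_prod_diff) (auto intro!: p_integral_mult p_integral_add p_integral_diff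
        simp: minus_divide_left[symmetric])
qed

lemma first_congruence:
  assumes p: "prime p" "p > 2"
  shows "rat_cong (\<Sum>k=1..p-1. (pochhammer (1/2 :: rat) k)^2 / (pochhammer 1 k)^2 * (1 / of_nat k))
                  (- 2 * harm ((p - 1) div 2)) (p^3)"
proof -
  define S where "S = (\<Sum>k=1..p-1. (pochhammer (1/2 :: rat) k)^2 / (pochhammer 1 k)^2 * (1 / of_nat k))"
  define n where "n = (p - 1) div 2"
  define h where "h = (of_nat p * (1/2) :: rat)"
  define Q where "Q = pcompose (f_poly (p - 1)) [:-1/2, 1:]"
  have pn: "(of_nat p :: rat) = 2 * of_nat n + 1"
    using p prime_odd_nat[OF p(1)] unfolding n_def by (auto elim!: oddE)
  have arg: "poly [:-1/2, 1:] h = of_nat n" "poly [:-1/2, 1:] (- h) = -1 - of_nat n"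
    unfolding h_def pn by (simp_all add: field_simps)
  have "poly Q h = -2 * harm n" "poly Q (- h) = -2 * harm n"
    unfolding Q_def poly_pcompose arg poly_f_poly_reflect
    by (simp_all add: poly_f_poly_of_nat n_def)
  moreover have "coeff Q 0 = S"
    unfolding Q_def poly_0_coeff_0[symmetric] poly_pcompose poly_f_poly S_def
      hypergeometric_term_eq_c_coeff_D_poly
    by simp
  moreover have "p_multiple p 3 (poly Q h + poly Q (- h) - 2 * coeff Q 0)"
    using p_multiple_coeff_2_f_poly_half_shift[OF p] poly_p_integral_f_poly[OF p(1)] p_integral_half[OF p]
    unfolding Q_def h_def by (intro p_multiple_poly_symmetric_pair) (auto simp: minus_divide_left[symmetric])
  ultimately have "p_multiple p 3 ((-2 * harm n + -2 * harm n - 2 * S) / of_nat 2)"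
    using p by (intro p_multiple_divide_of_nat) (auto dest: dvd_imp_le)
  moreover have "(-2 * harm n + -2 * harm n - 2 * S) / of_nat 2 = - (S - (-2 * harm n))"
    by simp
  ultimately have "p_multiple p 3 (S - (-2 * harm n))" by (metis p_multiple_uminus)
  then show ?thesis
    unfolding S_def n_def by (rule rat_cong_if_p_multiple[OF p(1)])
qed

lemma second_congruence:
  assumes p: "prime p" "p > 2"
  shows "rat_cong (\<Sum>k=1..p-1. (pochhammer (1/2 :: rat) k)^2 / (pochhammer 1 k)^2 * (1 / (of_nat k)^2))
                  (- 2 * (harm ((p - 1) div 2))^2) (p^2)"
proof -
  define n where "n = (p - 1) div 2"
  have "(\<Sum>k=1..p-1. (pochhammer (1/2 :: rat) k)^2 / (pochhammer 1 k)^2 * (1 / (of_nat k)^2))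
        - (\<Sum>k=1..p-1. c_coeff k / of_nat k * poly (D_poly k) (of_nat n))
      = (\<Sum>k=1..p-1. c_coeff k / of_nat k * (poly (D_poly k) (-1/2) - poly (D_poly k) (of_nat n)))"
    unfolding sum_subtractf[symmetric] hypergeometric_square_term_eq_c_coeff_D_poly
    by (simp add: algebra_simps)
  also have "p_multiple p 2 \<dots>"
    using p_multiple_D_poly_minus_half_diff[OF p] p_integral_c_coeff[OF p(1)] p(1)
    unfolding n_def
    by (intro p_multiple_sum p_multiple_mult_left p_integral_divide_of_nat) (auto dest: dvd_imp_le)
  finally show ?thesis
    using sum_c_coeff_D_poly_of_nat[of n "p - 1"]
    unfolding n_def by (intro rat_cong_if_p_multiple[OF p(1)]) simp
qed

theorem theorem4p2:
  fixes p :: nat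
  assumes "prime p" and "p > 3"
  shows "rat_cong (\<Sum>k=1..p-1. (pochhammer (1/2 :: rat) k)^2 / (pochhammer 1 k)^2 * (1 / of_nat k))
                  (- 2 * harm ((p - 1) div 2)) (p^3) \<and>
         rat_cong (\<Sum>k=1..p-1. (pochhammer (1/2 :: rat) k)^2 / (pochhammer 1 k)^2 * (1 / (of_nat k)^2))
                  (- 2 * (harm ((p - 1) div 2))^2) (p^2)"
  using first_congruence second_congruence assms by simp

end
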